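(* Let $p\ge 1$ and $n\ge p$ be integers. Then $$S_{n,s}\cap S_{n+1,s}=\varnothing\qquad\text{and}\qquad S_{n,s}\cap S_{n+2,s}=\varnothing .$$ That is, no real number $\Lambda$ is simultaneously an eigenvalue of order $n$ with an even eigenfunction and an eigenvalue of order $m$ with an even eigenfunction, when $m=n+1$ or $m=n+2$.
   Context: Fix an integer $p\ge 1$. For an integer $k\ge p$ and a real number $\Lambda$, define the differential operator on $[-1,1]$ $$L^{2k}(\Lambda)=(-1)^k\frac{d^{2k}}{dx^{2k}}-\Lambda(-1)^{k-p}\frac{d^{2k-2p}}{dx^{2k-2p}}.$$ A real number $\Lambda$ is an eigenvalue of order $k$ if there is a real function $z\in C^{2k}[-1,1]$, $z\not\equiv 0$, such that - $L^{2k}(\Lambda)z=0$ on $[-1,1]$, and - $z^{(j)}(-1)=z^{(j)}(1)=0$ for $j=0,\dots,k-1$. Such a $z$ is called an eigenfunction of order $k$ with eigenvalue $\Lambda$. These eigenvalues and eigenfunctions are exactly the critical values and critical points of the Rayleigh quotient $$\Phi_k(u)=\frac{\int_{-1}^1 (u^{(k)})^2\,dx}{\int_{-1}^1 (u^{(k-p)})^2\,dx}$$ on $\mathring W_2^k(-1,1)$. Here $\mathring W_2^k(-1,1)$ denotes the functions $u\in C^{k-1}[-1,1]$ with $u^{(j)}(\pm1)=0$ for $j<k$ and $u^{(k)}\in L_2$. Let $S_{k,s}$ (resp. $S_{k,a}$) denote the set of eigenvalues of order $k$ that admit an even (resp. odd) eigenfunction of order $k$. *)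

theory Defs
  imports "HOL-Analysis.Analysis"
begin

definition Cderivs :: "nat \<Rightarrow> (nat \<Rightarrow> real \<Rightarrow> real) \<Rightarrow> bool" where
  "Cderivs m D \<longleftrightarrow>
     (\<forall>j<m. \<forall>x\<in>{-1..1}. (D j has_real_derivative D (Suc j) x) (at x within {-1..1}))
     \<and> continuous_on {-1..1} (D m)"

definition eigenfunction :: "nat \<Rightarrow> nat \<Rightarrow> real \<Rightarrow> (real \<Rightarrow> real) \<Rightarrow> bool" where
  "eigenfunction p k \<Lambda> z \<longleftrightarrow> p \<le> k \<and>
     (\<exists>D. Cderivs (2*k) D \<and> (\<forall>x\<in>{-1..1}. D 0 x = z x) \<and>
        (\<forall>x\<in>{-1..1}. (-1)^k * D (2*k) x - \<Lambda> * (-1)^(k-p) * D (2*k-2*p) x = 0) \<and>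
        (\<forall>j<k. D j (-1) = 0 \<and> D j 1 = 0)) \<and>
     (\<exists>x\<in>{-1..1}. z x \<noteq> 0)"

definition S_s :: "nat \<Rightarrow> nat \<Rightarrow> real set" where
  "S_s p k = {\<Lambda>. \<exists>z. eigenfunction p k \<Lambda> z \<and> (\<forall>x\<in>{-1..1}. z (-x) = z x)}"

definition S_a :: "nat \<Rightarrow> nat \<Rightarrow> real set" where
  "S_a p k = {\<Lambda>. \<exists>z. eigenfunction p k \<Lambda> z \<and> (\<forall>x\<in>{-1..1}. z (-x) = - z x)}"

end

theory Submission
  imports Defs
begin

text \<open>Writing \<open>c = (-1)^p \<Lambda>\<close>, an eigenfunction \<open>z\<close> of order \<open>k\<close> solves
  \<open>z^(2k) = c z^(2k-2p)\<close> with \<open>k\<close> Dirichlet conditions at \<open>\<plusminus>1\<close>, and if \<open>z\<close> is even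
  then \<open>z^(j)(-1) = (-1)^j z^(j)(1)\<close>. A Rellich--Pohozaev identity (multiplier \<open>x z'\<close>) shows
  that a single further condition \<open>z^(k)(\<plusminus>1) = 0\<close> forces \<open>z = 0\<close>.
  If \<open>z\<close> and \<open>y\<close> are even eigenfunctions of orders \<open>n\<close> and \<open>n + 1\<close> for the same \<open>\<Lambda>\<close>,
  then \<open>y''\<close> solves the equation of order \<open>n\<close>, and Green's identity for \<open>z\<close> and \<open>y''\<close>
  reduces, by parity, to \<open>z^(n)(1) y^(n+1)(1) = 0\<close>, contradicting rigidity.
  Orders \<open>n\<close> and \<open>n + 2\<close> are reduced to this case by a suitable combination of \<open>y''\<close> and \<open>z\<close>.\<close>

definition deriv_seq :: "(nat \<Rightarrow> real \<Rightarrow> real) \<Rightarrow> bool" where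
  "deriv_seq E \<longleftrightarrow>
     (\<forall>j. \<forall>x\<in>{-1..1}. (E j has_real_derivative E (Suc j) x) (at x within {-1..1}))"

lemma deriv_seqD:
  "deriv_seq E \<Longrightarrow> x \<in> {-1..1} \<Longrightarrow> (E j has_real_derivative E (Suc j) x) (at x within {-1..1})"
  unfolding deriv_seq_def by blast

lemma deriv_seq_continuous_on: "deriv_seq E \<Longrightarrow> continuous_on {-1..1} (E j)"
  unfolding continuous_on_eq_continuous_within by (meson DERIV_continuous deriv_seqD)

lemma deriv_seq_shift: "deriv_seq E \<Longrightarrow> deriv_seq (\<lambda>j. E (j + i))"
  unfolding deriv_seq_def by simp

lemma deriv_seq_lincomb:
  "deriv_seq E \<Longrightarrow> deriv_seq F \<Longrightarrow> deriv_seq (\<lambda>j x. a * E j x + b * F j x)"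
  unfolding deriv_seq_def by (auto intro!: DERIV_add DERIV_cmult)

text \<open>The derivatives of \<open>x F'(x)\<close>.\<close>

lemma deriv_seq_id_times_deriv:
  assumes "deriv_seq F"
  shows "deriv_seq (\<lambda>j x. x * F (Suc j) x + real j * F j x)"
  unfolding deriv_seq_def
proof (intro allI ballI)
  fix j and x :: real assume x: "x \<in> {-1..1}"
  have "((\<lambda>t. t * F (Suc j) t + real j * F j t) has_real_derivative
      (1 * F (Suc j) x + F (Suc (Suc j)) x * x) + real j * F (Suc j) x) (at x within {-1..1})"
    using assms x by (intro DERIV_add DERIV_mult DERIV_cmult DERIV_ident deriv_seqD)
  then show "((\<lambda>t. t * F (Suc j) t + real j * F j t) has_real_derivative
      x * F (Suc (Suc j)) x + real (Suc j) * F (Suc j) x) (at x within {-1..1})"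
    by (simp add: algebra_simps)
qed

lemma has_real_derivative_unique_within_interval:
  assumes "x \<in> {-1..1::real}"
    and "(f has_real_derivative a) (at x within {-1..1})"
    and "(f has_real_derivative b) (at x within {-1..1})"
  shows "a = b"
  using assms vector_derivative_unique_within_closed_interval[of "-1" 1 x f a b]
  by (simp add: has_real_derivative_iff_has_vector_derivative)

lemma deriv_seq_eq_0:
  assumes "deriv_seq E" "\<forall>x\<in>{-1..1}. E 0 x = 0"
  shows "\<forall>x\<in>{-1..1}. E j x = 0"
proof (induction j)
  case 0
  then show ?case using assms(2) .
next
  case (Suc j)
  show ?case
  proof
    fix x :: real assume x: "x \<in> {-1..1}"
    have "(E j has_real_derivative 0) (at x within {-1..1})"
      by (rule has_field_derivative_transform_within[OF DERIV_const zero_less_one x])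
        (use Suc in auto)
    then show "E (Suc j) x = 0"
      using has_real_derivative_unique_within_interval[OF x _ deriv_seqD[OF assms(1) x]] by metis
  qed
qed

lemma deriv_seq_even:
  assumes "deriv_seq E" "\<forall>x\<in>{-1..1}. E 0 (-x) = E 0 x"
  shows "\<forall>x\<in>{-1..1}. E j (-x) = (-1)^j * E j x"
proof (induction j)
  case 0
  then show ?case using assms(2) by simp
next
  case (Suc j)
  show ?case
  proof
    fix x :: real assume x: "x \<in> {-1..1}"
    have "(E j has_real_derivative E (Suc j) (-x)) (at (-x) within uminus ` {-1..1})"
      using deriv_seqD[OF assms(1), of "-x"] x by simp
    from DERIV_image_chain[OF this DERIV_minus[OF DERIV_ident]]
    have "((\<lambda>t. E j (-t)) has_real_derivative - E (Suc j) (-x)) (at x within {-1..1})"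
      by (simp add: o_def)
    then have "((\<lambda>t. (-1)^j * E j t) has_real_derivative - E (Suc j) (-x)) (at x within {-1..1})"
      by (rule has_field_derivative_transform_within[OF _ zero_less_one x]) (use Suc in auto)
    moreover have "((\<lambda>t. (-1)^j * E j t) has_real_derivative (-1)^j * E (Suc j) x) (at x within {-1..1})"
      using assms(1) x by (intro DERIV_cmult deriv_seqD)
    ultimately have "- E (Suc j) (-x) = (-1)^j * E (Suc j) x"
      using has_real_derivative_unique_within_interval[OF x] by blast
    then show "E (Suc j) (-x) = (-1)^Suc j * E (Suc j) x" by simp
  qed
qed

lemma deriv_seq_eq_0_from_boundary:
  assumes "deriv_seq E" "\<forall>x\<in>{-1..1}. E k x = 0" "\<forall>j<k. E j 1 = 0"
  shows "\<forall>x\<in>{-1..1}. E 0 x = 0"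
  using assms
proof (induction k arbitrary: E)
  case 0
  then show ?case by simp
next
  case (Suc k)
  have E1: "\<forall>x\<in>{-1..1}. E 1 x = 0"
    using Suc.IH[OF deriv_seq_shift[OF Suc.prems(1), of 1]] Suc.prems(2,3) by simp
  show ?case
  proof
    fix x :: real assume x: "x \<in> {-1..1}"
    have "(E 0 has_derivative (\<lambda>h. 0)) (at y within {-1..1})" if "y \<in> {-1..1}" for y
      using deriv_seqD[OF Suc.prems(1) that, of 0] E1 that
      by (simp add: has_field_derivative_def lambda_zero)
    then have "E 0 x = E 0 1"
      by (intro has_derivative_zero_unique[OF convex_real_interval(5) _ x]) auto
    then show "E 0 x = 0" using Suc.prems(3) by simp
  qed
qed

lemma integrable_deriv_seq_mult:
  "deriv_seq F \<Longrightarrow> deriv_seq G \<Longrightarrow> (\<lambda>x. F i x * G j x) integrable_on {-1..1}"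
  by (intro integrable_continuous_interval continuous_intros deriv_seq_continuous_on)

lemma integral_by_parts_deriv_seq:
  assumes "deriv_seq F" "deriv_seq G"
  shows "integral {-1..1} (\<lambda>x. F (Suc a) x * G b x) =
     F a 1 * G b 1 - F a (-1) * G b (-1) - integral {-1..1} (\<lambda>x. F a x * G (Suc b) x)"
proof -
  have "((\<lambda>x. F a x * G b x) has_vector_derivative F (Suc a) x * G b x + F a x * G (Suc b) x)
      (at x within {-1..1})" if "x \<in> {-1..1}" for x
    using DERIV_mult[OF deriv_seqD[OF assms(1) that] deriv_seqD[OF assms(2) that]]
    by (simp add: has_real_derivative_iff_has_vector_derivative mult.commute)
  then have "((\<lambda>x. F (Suc a) x * G b x + F a x * G (Suc b) x) has_integral
      F a 1 * G b 1 - F a (-1) * G b (-1)) {-1..1}"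
    using fundamental_theorem_of_calculus[of "-1" 1 "\<lambda>x. F a x * G b x"] by simp
  then show ?thesis
    using integral_add[OF integrable_deriv_seq_mult[OF assms, of "Suc a" b]
        integrable_deriv_seq_mult[OF assms, of a "Suc b"]]
    by (simp add: integral_unique)
qed

definition boundary_form ::
    "(nat \<Rightarrow> real \<Rightarrow> real) \<Rightarrow> (nat \<Rightarrow> real \<Rightarrow> real) \<Rightarrow> nat \<Rightarrow> nat \<Rightarrow> nat \<Rightarrow> real" where
  "boundary_form F G a b m =
     (\<Sum>j<m. (-1)^j * (F (a+m-1-j) 1 * G (b+j) 1 - F (a+m-1-j) (-1) * G (b+j) (-1)))"

lemma integral_by_parts_iterated:
  assumes "deriv_seq F" "deriv_seq G"
  shows "integral {-1..1} (\<lambda>x. F (a+m) x * G b x) =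
    boundary_form F G a b m + (-1)^m * integral {-1..1} (\<lambda>x. F a x * G (b+m) x)"
proof (induction m arbitrary: a)
  case 0
  then show ?case by (simp add: boundary_form_def)
next
  case (Suc m)
  have "integral {-1..1} (\<lambda>x. F (a + Suc m) x * G b x) =
      boundary_form F G (Suc a) b m + (-1)^m * integral {-1..1} (\<lambda>x. F (Suc a) x * G (b+m) x)"
    using Suc.IH[of "Suc a"] by simp
  also have "integral {-1..1} (\<lambda>x. F (Suc a) x * G (b+m) x) =
     F a 1 * G (b+m) 1 - F a (-1) * G (b+m) (-1) - integral {-1..1} (\<lambda>x. F a x * G (b + Suc m) x)"
    using integral_by_parts_deriv_seq[OF assms] by simp
  also have "boundary_form F G (Suc a) b m + (-1)^m * (F a 1 * G (b+m) 1 - F a (-1) * G (b+m) (-1)) =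
      boundary_form F G a b (Suc m)"
    by (simp add: boundary_form_def sum.lessThan_Suc)
  ultimately show ?case by (simp add: algebra_simps)
qed

lemma boundary_form_eq_0:
  assumes "\<forall>j<m. (F (a+m-1-j) 1 = 0 \<or> G (b+j) 1 = 0) \<and> (F (a+m-1-j) (-1) = 0 \<or> G (b+j) (-1) = 0)"
  shows "boundary_form F G a b m = 0"
  unfolding boundary_form_def using assms by (intro sum.neutral) auto

lemma integral_deriv_seq_energy:
  assumes "deriv_seq F" "\<forall>j<k. F j 1 = 0 \<and> F j (-1) = 0"
  shows "integral {-1..1} (\<lambda>x. F (2*k) x * F 0 x) = (-1)^k * integral {-1..1} (\<lambda>x. (F k x)^2)"
  using integral_by_parts_iterated[OF assms(1) assms(1), of k k 0]
    boundary_form_eq_0[of k F k F 0] assms(2)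
  by (simp add: mult_2 power2_eq_square)

text \<open>\<open>E j\<close> plays the role of \<open>z^(j)\<close> for a solution \<open>z\<close> of
  \<open>z^(2k) = c z^(2k-2p)\<close>; the relation is imposed on all higher derivatives as well.\<close>

definition ode_solution :: "nat \<Rightarrow> nat \<Rightarrow> real \<Rightarrow> (nat \<Rightarrow> real \<Rightarrow> real) \<Rightarrow> bool" where
  "ode_solution p k c E \<longleftrightarrow>
     deriv_seq E \<and> (\<forall>j\<ge>2*k. \<forall>x\<in>{-1..1}. E j x = c * E (j - 2*p) x)"

lemma ode_solution_deriv_seq: "ode_solution p k c E \<Longrightarrow> deriv_seq E"
  by (simp add: ode_solution_def)

lemma ode_solutionD:
  "ode_solution p k c E \<Longrightarrow> 2*k \<le> j \<Longrightarrow> x \<in> {-1..1} \<Longrightarrow> E j x = c * E (j - 2*p) x"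
  by (simp add: ode_solution_def)

lemma ode_solution_Suc: "ode_solution p k c E \<Longrightarrow> ode_solution p (Suc k) c E"
  unfolding ode_solution_def by auto

lemma ode_solution_shift2:
  assumes "ode_solution p (Suc k) c Y" "p \<le> k"
  shows "ode_solution p k c (\<lambda>j. Y (j + 2))"
  unfolding ode_solution_def
proof (intro conjI allI impI ballI)
  show "deriv_seq (\<lambda>j. Y (j + 2))"
    using assms(1) by (intro deriv_seq_shift ode_solution_deriv_seq)
  fix j and x :: real assume "2*k \<le> j" "x \<in> {-1..1}"
  moreover have "j + 2 - 2*p = j - 2*p + 2" using \<open>2*k \<le> j\<close> assms(2) by simp
  ultimately show "Y (j + 2) x = c * Y (j - 2*p + 2) x"
    using ode_solutionD[OF assms(1)] by fastforce
qed

lemma ode_solution_lincomb: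
  assumes "ode_solution p k c E" "ode_solution p k c F"
  shows "ode_solution p k c (\<lambda>j x. a * E j x + b * F j x)"
  using assms deriv_seq_lincomb
  unfolding ode_solution_def by (simp add: algebra_simps)

lemma integral_ode_solution_mult:
  assumes "ode_solution p k c E"
  shows "integral {-1..1} (\<lambda>x. E (2*k) x * g x) = c * integral {-1..1} (\<lambda>x. E (2*k - 2*p) x * g x)"
proof -
  have "integral {-1..1} (\<lambda>x. E (2*k) x * g x) = integral {-1..1} (\<lambda>x. c * (E (2*k - 2*p) x * g x))"
    by (rule integral_cong) (simp add: ode_solutionD[OF assms])
  then show ?thesis by simp
qed

lemma ode_solution_green_identity:
  assumes "ode_solution p k c E" "ode_solution p k c W"
  shows "boundary_form E W 0 0 (2*k) = c * boundary_form E W 0 0 (2*k - 2*p)"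
proof -
  have E: "deriv_seq E" and W: "deriv_seq W"
    using assms by (auto intro: ode_solution_deriv_seq)
  let ?I = "\<lambda>f. integral {-1..1::real} f"
  have "(-1::real) ^ (2*k - 2*p) = 1" by (simp add: neg_one_even_power)
  then have "boundary_form E W 0 0 (2*k - 2*p) =
      ?I (\<lambda>x. E (2*k - 2*p) x * W 0 x) - ?I (\<lambda>x. E 0 x * W (2*k - 2*p) x)"
    using integral_by_parts_iterated[OF E W, of 0 "2*k - 2*p" 0] by simp
  moreover have "boundary_form E W 0 0 (2*k) =
      ?I (\<lambda>x. E (2*k) x * W 0 x) - ?I (\<lambda>x. E 0 x * W (2*k) x)"
    using integral_by_parts_iterated[OF E W, of 0 "2*k" 0] by simp
  moreover have "?I (\<lambda>x. E (2*k) x * W 0 x) = c * ?I (\<lambda>x. E (2*k - 2*p) x * W 0 x)"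
    by (rule integral_ode_solution_mult[OF assms(1)])
  moreover have "?I (\<lambda>x. E 0 x * W (2*k) x) = c * ?I (\<lambda>x. E 0 x * W (2*k - 2*p) x)"
    using integral_ode_solution_mult[OF assms(2), of "E 0"] by (simp add: mult.commute)
  ultimately show ?thesis by (simp add: right_diff_distrib)
qed

text \<open>Rellich--Pohozaev identity, obtained by testing the equation against \<open>x z'(x)\<close>,
  whose derivatives are \<open>G\<close>: every integration by parts against \<open>G\<close> is free of boundary
  terms, and the multiplier produces the extra term \<open>2p \<integral> z z^(2k)\<close>.\<close>

lemma ode_solution_pohozaev:
  assumes p: "0 < p" "p \<le> k" and F: "ode_solution p k c F"
    and bc: "\<forall>j\<le>k. F j 1 = 0 \<and> F j (-1) = 0"
  shows "integral {-1..1} (\<lambda>x. F 0 x * F (2*k) x) = 0"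
proof -
  have dF: "deriv_seq F" using F by (rule ode_solution_deriv_seq)
  define G where "G = (\<lambda>j x. x * F (Suc j) x + real j * F j x)"
  have dG: "deriv_seq G" unfolding G_def using dF by (rule deriv_seq_id_times_deriv)
  let ?I = "\<lambda>f. integral {-1..1::real} f"
  have symmetric: "?I (\<lambda>x. F m x * G 0 x) = ?I (\<lambda>x. F 0 x * G m x)" if "m \<le> 2*k" "even m" for m
  proof -
    have "boundary_form F G 0 0 m = 0"
    proof (rule boundary_form_eq_0, intro allI impI)
      fix j assume "j < m"
      then have "m - 1 - j \<le> k \<or> j < k" using that by linarith
      then show "(F (0+m-1-j) 1 = 0 \<or> G (0+j) 1 = 0) \<and> (F (0+m-1-j) (-1) = 0 \<or> G (0+j) (-1) = 0)"
        using bc unfolding G_def by auto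
    qed
    then show ?thesis using integral_by_parts_iterated[OF dF dG, of 0 m 0] that by simp
  qed
  have G_top: "G (2*k) x = c * G (2*k - 2*p) x + 2 * real p * F (2*k) x" if x: "x \<in> {-1..1}" for x
  proof -
    have "F (Suc (2*k)) x = c * F (Suc (2*k - 2*p)) x"
      using ode_solutionD[OF F, of "Suc (2*k)" x] x p by (simp add: Suc_diff_le)
    moreover have "F (2*k) x = c * F (2*k - 2*p) x" using ode_solutionD[OF F, of "2*k" x] x by simp
    moreover have "real (2*k - 2*p) = 2 * real k - 2 * real p" using p by (simp add: of_nat_diff)
    ultimately show ?thesis unfolding G_def by (simp add: algebra_simps)
  qed
  have "F 0 x * G (2*k) x = c * (F 0 x * G (2*k - 2*p) x) + 2 * real p * (F 0 x * F (2*k) x)"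
    if "x \<in> {-1..1}" for x
    unfolding G_top[OF that] by (simp add: algebra_simps)
  then have "?I (\<lambda>x. F 0 x * G (2*k) x) =
      ?I (\<lambda>x. c * (F 0 x * G (2*k - 2*p) x) + 2 * real p * (F 0 x * F (2*k) x))"
    by (intro integral_cong)
  also have "\<dots> = c * ?I (\<lambda>x. F 0 x * G (2*k - 2*p) x) + 2 * real p * ?I (\<lambda>x. F 0 x * F (2*k) x)"
    using integral_add[OF integrable_on_cmult_left[OF integrable_deriv_seq_mult[OF dF dG]]
        integrable_on_cmult_left[OF integrable_deriv_seq_mult[OF dF dF]]] by simp
  finally have "?I (\<lambda>x. F 0 x * G (2*k) x) =
      c * ?I (\<lambda>x. F 0 x * G (2*k - 2*p) x) + 2 * real p * ?I (\<lambda>x. F 0 x * F (2*k) x)" .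
  moreover have "?I (\<lambda>x. F (2*k) x * G 0 x) = c * ?I (\<lambda>x. F (2*k - 2*p) x * G 0 x)"
    by (rule integral_ode_solution_mult[OF F])
  ultimately show ?thesis using symmetric[of "2*k"] symmetric[of "2*k - 2*p"] p by simp
qed

lemma ode_solution_dirichlet_eq_0:
  assumes p: "0 < p" "p \<le> k" and F: "ode_solution p k c F"
    and bc: "\<forall>j\<le>k. F j 1 = 0 \<and> F j (-1) = 0"
  shows "\<forall>x\<in>{-1..1}. F 0 x = 0"
proof -
  have dF: "deriv_seq F" using F by (rule ode_solution_deriv_seq)
  have "integral {-1..1} (\<lambda>x. (F k x)^2) = 0"
    using ode_solution_pohozaev[OF assms] integral_deriv_seq_energy[OF dF, of k] bc
    by (simp add: mult.commute)
  then have "\<forall>x\<in>{-1..1}. F k x = 0"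
    by (subst (asm) integral_eq_0_iff)
      (auto intro!: continuous_intros deriv_seq_continuous_on[OF dF])
  then show ?thesis using deriv_seq_eq_0_from_boundary[OF dF] bc by simp
qed

lemma ode_solution_Suc_of_shift2:
  assumes E: "ode_solution p k c E" and "p \<le> k" and Y: "deriv_seq Y"
    and YE: "\<forall>j. \<forall>x\<in>{-1..1}. Y (j + 2) x = t * E j x"
  shows "ode_solution p (Suc k) c Y"
  unfolding ode_solution_def
proof (intro conjI allI impI ballI Y)
  fix j and x :: real assume j: "2 * Suc k \<le> j" and x: "x \<in> {-1..1}"
  define i where "i = j - 2"
  have i: "j = i + 2" "2*k \<le> i" using j unfolding i_def by auto
  moreover have "j - 2*p = (i - 2*p) + 2" using i \<open>p \<le> k\<close> by simp
  ultimately show "Y j x = c * Y (j - 2*p) x"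
    using YE x ode_solutionD[OF E i(2) x] by simp
qed

definition even_dirichlet_solution :: "nat \<Rightarrow> nat \<Rightarrow> real \<Rightarrow> (nat \<Rightarrow> real \<Rightarrow> real) \<Rightarrow> bool" where
  "even_dirichlet_solution p k c E \<longleftrightarrow> ode_solution p k c E \<and>
     (\<forall>j<k. E j 1 = 0 \<and> E j (-1) = 0) \<and> (\<forall>x\<in>{-1..1}. E 0 (-x) = E 0 x)"

lemma even_dirichlet_solution_parity:
  assumes "even_dirichlet_solution p k c E"
  shows "E j (-1) = (-1)^j * E j 1"
  using assms deriv_seq_even[OF ode_solution_deriv_seq, of p k c E]
  unfolding even_dirichlet_solution_def by auto

lemma even_dirichlet_solution_eq_0:
  assumes "0 < p" "p \<le> k" and E: "even_dirichlet_solution p k c E" and "E k 1 = 0"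
  shows "\<forall>x\<in>{-1..1}. E 0 x = 0"
proof (rule ode_solution_dirichlet_eq_0[OF assms(1,2)])
  show "ode_solution p k c E" using E by (simp add: even_dirichlet_solution_def)
  show "\<forall>j\<le>k. E j 1 = 0 \<and> E j (-1) = 0"
    using E \<open>E k 1 = 0\<close> even_dirichlet_solution_parity[OF E, of k]
    unfolding even_dirichlet_solution_def by (auto simp: le_less)
qed

text \<open>Green's identity between \<open>z\<close> (order \<open>n\<close>) and \<open>y''\<close>, where \<open>y\<close> has order \<open>n + 1\<close>: all
  boundary terms vanish except the one pairing \<open>z^(n)\<close> with \<open>y^(n+1)\<close>, and by parity its
  contributions at \<open>1\<close> and \<open>-1\<close> add up instead of cancelling.\<close>

lemma even_dirichlet_solutions_Suc_boundary:
  assumes p: "0 < p" "p \<le> n"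
    and E: "even_dirichlet_solution p n c E" and Y: "even_dirichlet_solution p (Suc n) c Y"
  shows "E n 1 * Y (Suc n) 1 = 0"
proof -
  define W where "W = (\<lambda>j. Y (j + 2))"
  have bcE: "\<forall>j<n. E j 1 = 0 \<and> E j (-1) = 0" and bcW: "\<forall>j. j + 2 \<le> n \<longrightarrow> W j 1 = 0 \<and> W j (-1) = 0"
    using E Y unfolding even_dirichlet_solution_def W_def by auto
  have "ode_solution p n c W"
    unfolding W_def using Y p by (intro ode_solution_shift2) (auto simp: even_dirichlet_solution_def)
  then have "boundary_form E W 0 0 (2*n) = c * boundary_form E W 0 0 (2*n - 2*p)"
    using E by (intro ode_solution_green_identity) (auto simp: even_dirichlet_solution_def)
  also have "boundary_form E W 0 0 (2*n - 2*p) = 0"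
  proof (rule boundary_form_eq_0, intro allI impI)
    fix j assume "j < 2*n - 2*p"
    then have "2*n - 2*p - 1 - j < n \<or> j + 2 \<le> n" using p by linarith
    with bcE bcW show "(E (0 + (2*n - 2*p) - 1 - j) 1 = 0 \<or> W (0 + j) 1 = 0) \<and>
        (E (0 + (2*n - 2*p) - 1 - j) (-1) = 0 \<or> W (0 + j) (-1) = 0)" by auto
  qed
  finally have B0: "boundary_form E W 0 0 (2*n) = 0" by simp
  define t where "t = (\<lambda>j::nat. (-1::real)^j * (E (2*n-1-j) 1 * W j 1 - E (2*n-1-j) (-1) * W j (-1)))"
  have "boundary_form E W 0 0 (2*n) = sum t {..<2*n}" unfolding boundary_form_def t_def by simp
  also have "\<dots> = t (n-1) + sum t ({..<2*n} - {n-1})"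
    using p by (intro sum.remove) auto
  also have "sum t ({..<2*n} - {n-1}) = 0"
  proof (rule sum.neutral, rule ballI)
    fix j assume "j \<in> {..<2*n} - {n-1}"
    then have "2*n-1-j < n \<or> j + 2 \<le> n" by auto
    then show "t j = 0" unfolding t_def using bcE bcW by auto
  qed
  also have "t (n-1) = (-1)^(n-1) * (2 * (E n 1 * Y (Suc n) 1))"
  proof -
    have "2*n-1-(n-1) = n" "n - 1 + 2 = Suc n" using p by auto
    then have "t (n-1) = (-1)^(n-1) * (E n 1 * Y (Suc n) 1 - E n (-1) * Y (Suc n) (-1))"
      unfolding t_def W_def by simp
    moreover have "E n (-1) * Y (Suc n) (-1) = - (E n 1 * Y (Suc n) 1)"
      using even_dirichlet_solution_parity[OF E, of n] even_dirichlet_solution_parity[OF Y, of "Suc n"]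
      by (simp add: power_add[symmetric] flip: mult_2)
    ultimately show ?thesis by simp
  qed
  finally show ?thesis using B0 by simp
qed

lemma even_dirichlet_solutions_Suc:
  assumes "0 < p" "p \<le> n"
    and E: "even_dirichlet_solution p n c E" and Y: "even_dirichlet_solution p (Suc n) c Y"
  shows "(\<forall>x\<in>{-1..1}. E 0 x = 0) \<or> (\<forall>x\<in>{-1..1}. Y 0 x = 0)"
  using even_dirichlet_solutions_Suc_boundary[OF assms] assms(2)
    even_dirichlet_solution_eq_0[OF assms(1,2) E] even_dirichlet_solution_eq_0[OF assms(1) _ Y]
  by auto

text \<open>For orders \<open>n\<close> and \<open>n + 2\<close>, the combination \<open>z^(n)(1) y'' - y^(n+2)(1) z\<close> is an even
  solution of order \<open>n + 1\<close>, which reduces to the previous case unless it vanishes; in that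
  case \<open>y''\<close> is proportional to \<open>z\<close>, so \<open>y\<close> itself solves the equation of order \<open>n + 1\<close>.\<close>

lemma even_dirichlet_solutions_Suc_Suc:
  assumes p: "0 < p" "p \<le> n"
    and E: "even_dirichlet_solution p n c E" and Y: "even_dirichlet_solution p (Suc (Suc n)) c Y"
  shows "(\<forall>x\<in>{-1..1}. E 0 x = 0) \<or> (\<forall>x\<in>{-1..1}. Y 0 x = 0)"
proof (subst disj_commute, rule disjCI)
  assume nzE: "\<not> (\<forall>x\<in>{-1..1}. E 0 x = 0)"
  then have En: "E n 1 \<noteq> 0" using even_dirichlet_solution_eq_0[OF p E] by blast
  have sE: "ode_solution p n c E" and sY: "ode_solution p (Suc (Suc n)) c Y"
    using E Y by (simp_all add: even_dirichlet_solution_def)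
  have dY: "deriv_seq Y" using sY by (rule ode_solution_deriv_seq)
  define F where "F = (\<lambda>j x. E n 1 * Y (j + 2) x + (- Y (n + 2) 1) * E j x)"
  have "even_dirichlet_solution p (Suc n) c F"
    unfolding even_dirichlet_solution_def
  proof (intro conjI)
    show "ode_solution p (Suc n) c F"
      unfolding F_def using p
      by (intro ode_solution_lincomb ode_solution_shift2[OF sY] ode_solution_Suc[OF sE]) simp
    show "\<forall>j<Suc n. F j 1 = 0 \<and> F j (-1) = 0"
    proof (intro allI impI)
      fix j assume "j < Suc n"
      then consider "j < n" | "j = n" by linarith
      then show "F j 1 = 0 \<and> F j (-1) = 0"
      proof cases
        case 1
        then show ?thesis using E Y unfolding F_def even_dirichlet_solution_def by simp
      next
        case 2
        then show ?thesis
          using even_dirichlet_solution_parity[OF E, of n] even_dirichlet_solution_parity[OF Y, of "n + 2"]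
          unfolding F_def by simp
      qed
    qed
    show "\<forall>x\<in>{-1..1}. F 0 (-x) = F 0 x"
      using E deriv_seq_even[OF dY, of 2] Y
      unfolding F_def even_dirichlet_solution_def by (simp add: numeral_2_eq_2)
  qed
  then have "\<forall>x\<in>{-1..1}. F 0 x = 0"
    using even_dirichlet_solutions_Suc[OF p E] nzE by blast
  moreover have "deriv_seq F"
    unfolding F_def by (intro deriv_seq_lincomb deriv_seq_shift dY ode_solution_deriv_seq[OF sE])
  ultimately have F0: "F j x = 0" if "x \<in> {-1..1}" for j x
    using deriv_seq_eq_0 that by blast
  have "\<forall>j. \<forall>x\<in>{-1..1}. Y (j + 2) x = Y (n + 2) 1 / E n 1 * E j x"
  proof (intro allI ballI)
    fix j and x :: real assume "x \<in> {-1..1}"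
    then have "E n 1 * Y (j + 2) x = Y (n + 2) 1 * E j x" using F0 unfolding F_def by simp
    then show "Y (j + 2) x = Y (n + 2) 1 / E n 1 * E j x" using En by (simp add: field_simps)
  qed
  then have "ode_solution p (Suc n) c Y"
    using ode_solution_Suc_of_shift2[OF sE p(2) dY] by blast
  moreover have "\<forall>j\<le>Suc n. Y j 1 = 0 \<and> Y j (-1) = 0"
    using Y unfolding even_dirichlet_solution_def by simp
  moreover have "p \<le> Suc n" using p by simp
  ultimately show "\<forall>x\<in>{-1..1}. Y 0 x = 0"
    using ode_solution_dirichlet_eq_0[OF p(1)] by blast
qed

text \<open>Continues the derivatives \<open>D 0, \<dots>, D m\<close> beyond \<open>m\<close> by the equation; the guard \<open>p = 0\<close>
  only serves termination.\<close>

function ode_extension ::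
    "nat \<Rightarrow> nat \<Rightarrow> real \<Rightarrow> (nat \<Rightarrow> real \<Rightarrow> real) \<Rightarrow> nat \<Rightarrow> real \<Rightarrow> real" where
  "ode_extension p m c D j x =
     (if j \<le> m \<or> p = 0 then D j x else c * ode_extension p m c D (j - 2*p) x)"
  by auto
termination by (relation "Wellfounded.measure (\<lambda>(p, m, c, D, j, x). j)") auto

declare ode_extension.simps [simp del]

lemma ode_extension_low: "j \<le> m \<Longrightarrow> ode_extension p m c D j = D j"
  by (rule ext) (simp add: ode_extension.simps)

lemma ode_extension_high:
  "m < j \<Longrightarrow> 0 < p \<Longrightarrow> ode_extension p m c D j x = c * ode_extension p m c D (j - 2*p) x"
  by (subst ode_extension.simps) simp

lemma deriv_seq_ode_extension:
  assumes p: "0 < p" "p \<le> k" and D: "Cderivs (2*k) D"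
    and eq: "\<forall>x\<in>{-1..1}. D (2*k) x = c * D (2*k - 2*p) x"
  shows "deriv_seq (ode_extension p (2*k) c D)"
  unfolding deriv_seq_def
proof (intro allI)
  let ?E = "ode_extension p (2*k) c D"
  have dD: "(D j has_real_derivative D (Suc j) x) (at x within {-1..1})"
    if "j < 2*k" "x \<in> {-1..1}" for j x
    using D that unfolding Cderivs_def by blast
  fix j show "\<forall>x\<in>{-1..1}. (?E j has_real_derivative ?E (Suc j) x) (at x within {-1..1})"
  proof (induction j rule: less_induct)
    case (less j)
    show ?case
    proof
      fix x :: real assume x: "x \<in> {-1..1}"
      consider "j < 2*k" | "j = 2*k" | "2*k < j" by linarith
      then show "(?E j has_real_derivative ?E (Suc j) x) (at x within {-1..1})"
      proof cases
        case 1
        then show ?thesis using dD[OF 1 x] by (simp add: ode_extension_low)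
      next
        case 2
        have "((\<lambda>y. c * D (2*k - 2*p) y) has_real_derivative c * D (Suc (2*k - 2*p)) x)
            (at x within {-1..1})"
          using dD[of "2*k - 2*p" x] x p by (intro DERIV_cmult) simp
        then have "(D (2*k) has_real_derivative c * D (Suc (2*k - 2*p)) x) (at x within {-1..1})"
          by (rule has_field_derivative_transform_within[OF _ zero_less_one x]) (use eq in auto)
        moreover have "?E (Suc j) x = c * D (Suc (2*k - 2*p)) x"
          using 2 p by (simp add: ode_extension_high ode_extension_low Suc_diff_le)
        ultimately show ?thesis using 2 by (simp add: ode_extension_low)
      next
        case 3
        have "?E j = (\<lambda>x. c * ?E (j - 2*p) x)" using 3 p by (simp add: ode_extension_high fun_eq_iff)
        moreover have "?E (Suc j) x = c * ?E (Suc (j - 2*p)) x"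
          using 3 p by (simp add: ode_extension_high Suc_diff_le)
        moreover have "(?E (j - 2*p) has_real_derivative ?E (Suc (j - 2*p)) x) (at x within {-1..1})"
          using less[of "j - 2*p"] p 3 x by auto
        ultimately show ?thesis by (simp add: DERIV_cmult)
      qed
    qed
  qed
qed

lemma ode_solution_ode_extension:
  assumes "0 < p" "p \<le> k" "Cderivs (2*k) D"
    and eq: "\<forall>x\<in>{-1..1}. D (2*k) x = c * D (2*k - 2*p) x"
  shows "ode_solution p k c (ode_extension p (2*k) c D)"
  unfolding ode_solution_def
proof (intro conjI allI impI ballI deriv_seq_ode_extension[OF assms])
  fix j and x :: real assume "2*k \<le> j" "x \<in> {-1..1}"
  then consider "j = 2*k" | "2*k < j" by linarith
  then show "ode_extension p (2*k) c D j x = c * ode_extension p (2*k) c D (j - 2*p) x"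
    by cases (use eq \<open>x \<in> {-1..1}\<close> \<open>0 < p\<close> in \<open>auto simp: ode_extension_low ode_extension_high\<close>)
qed

lemma S_s_imp_even_dirichlet_solution:
  assumes "0 < p" and "\<Lambda> \<in> S_s p k"
  obtains E where "even_dirichlet_solution p k (\<Lambda> * (-1)^p) E" "\<exists>x\<in>{-1..1}. E 0 x \<noteq> 0"
proof -
  obtain z D where pk: "p \<le> k" and D: "Cderivs (2*k) D" and Dz: "\<forall>x\<in>{-1..1}. D 0 x = z x"
    and eq: "\<forall>x\<in>{-1..1}. (-1)^k * D (2*k) x - \<Lambda> * (-1)^(k-p) * D (2*k - 2*p) x = 0"
    and bc: "\<forall>j<k. D j (-1) = 0 \<and> D j 1 = 0" and nz: "\<exists>x\<in>{-1..1}. z x \<noteq> 0"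
    and ev: "\<forall>x\<in>{-1..1}. z (-x) = z x"
    using assms(2) unfolding S_s_def eigenfunction_def by blast
  have sign: "(-1::real)^k * (-1)^(k-p) = (-1)^p"
  proof -
    have "k + (k - p) = p + 2*(k - p)" using pk by simp
    then have "(-1::real)^k * (-1)^(k-p) = (-1)^(p + 2*(k - p))" by (metis power_add)
    then show ?thesis by (simp add: power_add power_mult)
  qed
  have "D (2*k) x = \<Lambda> * (-1)^p * D (2*k - 2*p) x" if "x \<in> {-1..1}" for x
  proof -
    have "D (2*k) x = (-1)^k * ((-1)^k * D (2*k) x)" by simp
    also have "\<dots> = \<Lambda> * ((-1)^k * (-1)^(k-p)) * D (2*k - 2*p) x"
      using eq that by (simp add: algebra_simps)
    finally show ?thesis unfolding sign .
  qed
  then have "ode_solution p k (\<Lambda> * (-1)^p) (ode_extension p (2*k) (\<Lambda> * (-1)^p) D)"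
    using ode_solution_ode_extension[OF assms(1) pk D] by blast
  then show thesis
    using that[of "ode_extension p (2*k) (\<Lambda> * (-1)^p) D"] bc Dz nz ev
    unfolding even_dirichlet_solution_def by (auto simp: ode_extension_low)
qed

theorem mainTheorem1:
  fixes p n :: nat
  assumes "1 \<le> p" and "p \<le> n"
  shows "S_s p n \<inter> S_s p (n+1) = {} \<and> S_s p n \<inter> S_s p (n+2) = {}"
proof -
  have p: "0 < p" using assms(1) by simp
  show ?thesis
  proof (intro conjI equals0I)
    fix \<Lambda>
    assume "\<Lambda> \<in> S_s p n \<inter> S_s p (n+1)"
    then obtain E Y where
      "even_dirichlet_solution p n (\<Lambda> * (-1)^p) E" "\<exists>x\<in>{-1..1}. E 0 x \<noteq> 0"
      "even_dirichlet_solution p (Suc n) (\<Lambda> * (-1)^p) Y" "\<exists>x\<in>{-1..1}. Y 0 x \<noteq> 0"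
      using S_s_imp_even_dirichlet_solution[OF p] by (metis IntE Suc_eq_plus1)
    then show False using even_dirichlet_solutions_Suc[OF p assms(2)] by blast
  next
    fix \<Lambda>
    assume "\<Lambda> \<in> S_s p n \<inter> S_s p (n+2)"
    then obtain E Y where
      "even_dirichlet_solution p n (\<Lambda> * (-1)^p) E" "\<exists>x\<in>{-1..1}. E 0 x \<noteq> 0"
      "even_dirichlet_solution p (Suc (Suc n)) (\<Lambda> * (-1)^p) Y" "\<exists>x\<in>{-1..1}. Y 0 x \<noteq> 0"
      using S_s_imp_even_dirichlet_solution[OF p] by (metis IntE add_2_eq_Suc')
    then show False using even_dirichlet_solutions_Suc_Suc[OF p assms(2)] by blast
  qed
qed

end
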